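(* For $r\in\{1,\dots,n\}$ let $f_r=[\psi_1,\psi_1^*]\cdots[\psi_r,\psi_r^*]\in\mathrm{Cl}_q(n,k)$, where $[A,B]=AB-BA$. Let $\phi_a$ denote either $\psi_a$ or $\psi_a^*$. Then: (i) if $a>r$, then $\phi_a f_r=f_r\phi_a$ and $\omega_a f_r = f_r\omega_a$; (ii) if $a\le r$, then $\phi_a f_r=-f_r\phi_a$; (iii) for any $r,s\le n$, $f_rf_s=f_sf_r$ and $f_r^2=1$.
   Context: Let $\mathbb{k}$ be a field of characteristic different from $2$, let $q\in\mathbb{k}^\times$, and let $n,k$ be positive integers. The quantum Clifford algebra $\mathrm{Cl}_q(n,k)$ is the unital associative $\mathbb{k}$-algebra generated by $\psi_a,\psi_a^*,\omega_a,\omega_a^{-1}$ for $a\in\{1,\dots,n\}$, subject to the relations (for all $a,b\in\{1,\dots,n\}$): $\omega_a\omega_b=\omega_b\omega_a$; $\omega_a\omega_a^{-1}=1$; $\omega_a\psi_b=q^{\delta_{ab}}\psi_b\omega_a$; $\omega_a\psi_b^*=q^{-\delta_{ab}}\psi_b^*\omega_a$; $\psi_a\psi_b+\psi_b\psi_a=0$; $\psi_a^*\psi_b^*+\psi_b^*\psi_a^*=0$; $\psi_a\psi_a^*+q^k\psi_a^*\psi_a=\omega_a^{-k}$; $\psi_a\psi_a^*+q^{-k}\psi_a^*\psi_a=\omega_a^{k}$; and $\psi_a\psi_b^*+\psi_b^*\psi_a=0$ if $a\neq b$. *)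

theory Defs
  imports Main
begin

(* A k-algebra structure on 'a: a ring homomorphism from the field 'k into the centre of 'a. *)
definition k_algebra_emb :: "('k::field \<Rightarrow> 'a::ring_1) \<Rightarrow> bool" where
  "k_algebra_emb emb \<longleftrightarrow>
     emb 1 = 1 \<and> (\<forall>x y. emb (x + y) = emb x + emb y) \<and>
     (\<forall>x y. emb (x * y) = emb x * emb y) \<and> (\<forall>c z. emb c * z = z * emb c)"

definition commutator :: "'a::ring \<Rightarrow> 'a \<Rightarrow> 'a" where
  "commutator A B = A * B - B * A"

(* Elements psi a, psis a (the starred generator psi_a^star), om a (= omega_a), omi a (= omega_a^{-1}), a = 1..n,
   satisfying the defining relations of Cl_q(n,k). *)
definition qcl_relations ::
  "('k::field \<Rightarrow> 'a::ring_1) \<Rightarrow> 'k \<Rightarrow> nat \<Rightarrow> nat \<Rightarrow>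
   (nat \<Rightarrow> 'a) \<Rightarrow> (nat \<Rightarrow> 'a) \<Rightarrow> (nat \<Rightarrow> 'a) \<Rightarrow> (nat \<Rightarrow> 'a) \<Rightarrow> bool" where
  "qcl_relations emb q n k psi psis om omi \<longleftrightarrow>
    (\<forall>a\<in>{1..n}. \<forall>b\<in>{1..n}.
       om a * om b = om b * om a \<and>
       om a * omi a = 1 \<and>
       om a * psi b = emb q ^ (if a = b then 1 else 0) * psi b * om a \<and>
       om a * psis b = emb (inverse q) ^ (if a = b then 1 else 0) * psis b * om a \<and>
       psi a * psi b + psi b * psi a = 0 \<and>
       psis a * psis b + psis b * psis a = 0 \<and>
       psi a * psis a + emb q ^ k * psis a * psi a = omi a ^ k \<and>
       psi a * psis a + emb (inverse q) ^ k * psis a * psi a = om a ^ k \<and>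
       (a \<noteq> b \<longrightarrow> psi a * psis b + psis b * psi a = 0))"

definition fr :: "(nat \<Rightarrow> 'a::ring_1) \<Rightarrow> (nat \<Rightarrow> 'a) \<Rightarrow> nat \<Rightarrow> 'a" where
  "fr psi psis r = prod_list (map (\<lambda>i. commutator (psi i) (psis i)) [1..<Suc r])"

end

theory Submission
  imports Defs
begin

(*
  Write c_a = [psi_a, psi_a^*], so f_r = c_1 ... c_r. Since 2 is invertible, the anticommutation
  relations give psi_a psi_a = psi_a^* psi_a^* = 0, which makes psi_a and psi_a^* anticommute with c_a;
  generators of index b \<noteq> a anticommute with both psi_a and psi_a^*, hence commute with c_a, and
  omega_b commutes with c_a. Multiplying the two q-deformed relations for index a, whose right-hand
  sides omega_a^k and omega_a^-k are inverse to each other, yields c_a^2 = 1. Thus f_r is a product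
  of pairwise commuting involutions, and phi_a anticommutes with exactly one of its factors if
  a \<le> r and with none if a > r.
*)

lemma commute_commutator:
  fixes x y z :: "'a::ring"
  assumes "x * y = y * x" and "x * z = z * x"
  shows "x * commutator y z = commutator y z * x"
proof -
  have "x * y * z = y * z * x" "x * z * y = z * y * x"
    by (metis assms mult.assoc)+
  then show ?thesis
    by (simp add: commutator_def algebra_simps)
qed

lemma commute_commutator_if_anticommute:
  fixes x y z :: "'a::ring"
  assumes "x * y = - (y * x)" and "x * z = - (z * x)"
  shows "x * commutator y z = commutator y z * x"
proof -
  have "x * y * z = y * z * x" "x * z * y = z * y * x"
    by (metis assms mult.assoc minus_mult_left minus_mult_right minus_minus)+
  then show ?thesis
    by (simp add: commutator_def algebra_simps)
qed

lemma anticommute_commutator_left: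
  fixes x z :: "'a::ring"
  assumes "x * x = 0"
  shows "x * commutator x z = - (commutator x z * x)"
proof -
  have "z * x * x = 0"
    using assms by (simp add: mult.assoc)
  with assms show ?thesis
    by (simp add: commutator_def algebra_simps flip: mult.assoc)
qed

lemma anticommute_commutator_right:
  fixes x z :: "'a::ring"
  assumes "z * z = 0"
  shows "z * commutator x z = - (commutator x z * z)"
proof -
  have "z * (z * x) = 0"
    using assms by (simp flip: mult.assoc)
  with assms show ?thesis
    by (simp add: commutator_def algebra_simps mult.assoc)
qed

lemma commutator_square_eq_one:
  fixes x z s t :: "'a::ring_1"
  assumes "x * x = 0" and "z * z = 0"
    and unit: "(x * z + s * (z * x)) * (x * z + t * (z * x)) = 1"
    and central: "\<And>y. t * y = y * t" and "s * t = 1"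
  shows "commutator x z * commutator x z = 1"
proof -
  have xz_zx: "x * z * (z * x) = 0" and zx_xz: "z * x * (x * z) = 0"
    using assms(1,2) by (metis mult.assoc mult_zero_left mult_zero_right)+
  have "x * z * (t * (z * x)) = t * (x * z * (z * x))"
    by (metis central mult.assoc)
  moreover have "s * (z * x) * (t * (z * x)) = (s * t) * (z * x * (z * x))"
    by (metis central mult.assoc)
  ultimately have "(x * z + s * (z * x)) * (x * z + t * (z * x)) = x * z * (x * z) + z * x * (z * x)"
    using xz_zx zx_xz \<open>s * t = 1\<close> by (simp add: algebra_simps)
  then show ?thesis
    using unit xz_zx zx_xz by (simp add: commutator_def algebra_simps)
qed

lemma commute_prod_list:
  fixes x :: "'a::monoid_mult"
  assumes "\<forall>y\<in>set ys. x * y = y * x"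
  shows "x * prod_list ys = prod_list ys * x"
  using assms by (induction ys) (simp_all, metis mult.assoc)

lemma prod_list_commute:
  fixes ys zs :: "'a::monoid_mult list"
  assumes "\<forall>y\<in>set ys. \<forall>z\<in>set zs. y * z = z * y"
  shows "prod_list ys * prod_list zs = prod_list zs * prod_list ys"
proof -
  have "\<forall>z\<in>set zs. prod_list ys * z = z * prod_list ys"
    using assms by (metis commute_prod_list)
  then show ?thesis
    by (rule commute_prod_list)
qed

lemma anticommute_prod_list:
  fixes x u :: "'a::ring_1"
  assumes "\<forall>y\<in>set us. x * y = y * x" and "x * u = - (u * x)" and "\<forall>y\<in>set vs. x * y = y * x"
  shows "x * prod_list (us @ u # vs) = - (prod_list (us @ u # vs) * x)"
proof -
  have "x * prod_list (us @ u # vs) = (x * prod_list us) * u * prod_list vs"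
    by (simp add: mult.assoc)
  also have "\<dots> = prod_list us * (x * u) * prod_list vs"
    using commute_prod_list[OF assms(1)] by (simp add: mult.assoc)
  also have "\<dots> = - (prod_list us * u * (x * prod_list vs))"
    using assms(2) by (simp add: mult.assoc)
  also have "\<dots> = - (prod_list (us @ u # vs) * x)"
    using commute_prod_list[OF assms(3)] by (simp add: mult.assoc)
  finally show ?thesis .
qed

lemma prod_list_square_eq_one:
  fixes ys :: "'a::monoid_mult list"
  assumes "\<forall>y\<in>set ys. y * y = 1" and "\<forall>y\<in>set ys. \<forall>z\<in>set ys. y * z = z * y"
  shows "prod_list ys * prod_list ys = 1"
  using assms
proof (induction ys)
  case (Cons y ys)
  have IH: "prod_list ys * prod_list ys = 1"
    using Cons.prems by (intro Cons.IH) (meson list.set_intros)+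
  have "\<forall>z\<in>set ys. y * z = z * y"
    using Cons.prems(2) by (meson list.set_intros)
  then have commute: "prod_list ys * y = y * prod_list ys"
    by (simp add: commute_prod_list)
  have "prod_list (y # ys) * prod_list (y # ys) = y * (prod_list ys * y) * prod_list ys"
    by (simp add: mult.assoc)
  also have "\<dots> = (y * y) * (prod_list ys * prod_list ys)"
    unfolding commute by (simp add: mult.assoc)
  finally show ?case
    using Cons.prems(1) IH by simp
qed simp

lemma upt_split_at:
  assumes "i \<le> a" and "a < j"
  shows "[i..<j] = [i..<a] @ a # [Suc a..<j]"
  using assms upt_add_eq_append[of i a "j - a"] upt_conv_Cons[of a j] by simp

lemma power_mult_eq_one:
  fixes w v :: "'a::monoid_mult"
  assumes "w * v = 1"
  shows "w ^ m * v ^ m = 1"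
proof (induction m)
  case (Suc m)
  have "w ^ Suc m * v ^ Suc m = w * (w ^ m * v ^ m) * v"
    by (simp add: mult.assoc power_commutes)
  with Suc assms show ?case
    by simp
qed simp

lemma
  assumes "k_algebra_emb emb"
  shows k_algebra_emb_one: "emb 1 = 1"
    and k_algebra_emb_add: "emb (x + y) = emb x + emb y"
    and k_algebra_emb_mult: "emb (x * y) = emb x * emb y"
    and k_algebra_emb_central: "emb c * z = z * emb c"
  using assms unfolding k_algebra_emb_def by blast+

lemma k_algebra_emb_power:
  assumes "k_algebra_emb emb"
  shows "emb (x ^ m) = emb x ^ m"
  by (induction m) (simp_all add: k_algebra_emb_one[OF assms] k_algebra_emb_mult[OF assms])

lemma k_algebra_emb_inverse:
  assumes "k_algebra_emb emb" and "c \<noteq> 0"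
  shows "emb (inverse c) * emb c = 1"
  using assms by (simp flip: k_algebra_emb_mult add: k_algebra_emb_one)

lemma k_algebra_emb_double_eq_zero:
  fixes emb :: "'k::field \<Rightarrow> 'a::ring_1" and x :: 'a
  assumes "k_algebra_emb emb" and "(2::'k) \<noteq> 0" and "x + x = 0"
  shows "x = 0"
proof -
  have "emb 2 = 2"
    using k_algebra_emb_add[OF assms(1), of 1 1] k_algebra_emb_one[OF assms(1)] by simp
  then have "emb (inverse 2) * 2 = 1"
    using k_algebra_emb_inverse[OF assms(1,2)] by simp
  then have "x = emb (inverse 2) * (x + x)"
    by (metis mult.assoc mult.left_neutral mult_2)
  with assms(3) show ?thesis
    by simp
qed

locale quantum_clifford =
  fixes emb :: "'k::field \<Rightarrow> 'a::ring_1" and q :: 'k and n k :: nat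
    and psi psis om omi :: "nat \<Rightarrow> 'a"
  assumes two_nonzero: "(2::'k) \<noteq> 0" and q_nonzero: "q \<noteq> 0"
    and emb: "k_algebra_emb emb"
    and relations: "qcl_relations emb q n k psi psis om omi"
begin

lemmas relation = relations[unfolded qcl_relations_def, rule_format]

lemma psi_anticommute:
  assumes "a \<in> {1..n}" and "b \<in> {1..n}"
  shows "psi a * psi b = - (psi b * psi a)"
  unfolding eq_neg_iff_add_eq_0 using relation[OF assms] by blast

lemma psis_anticommute:
  assumes "a \<in> {1..n}" and "b \<in> {1..n}"
  shows "psis a * psis b = - (psis b * psis a)"
  unfolding eq_neg_iff_add_eq_0 using relation[OF assms] by blast

lemma psi_psis_anticommute:
  assumes "a \<in> {1..n}" and "b \<in> {1..n}" and "a \<noteq> b"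
  shows "psi a * psis b = - (psis b * psi a)"
  unfolding eq_neg_iff_add_eq_0 using relation[OF assms(1,2)] assms(3) by blast

lemma psis_psi_anticommute:
  assumes "a \<in> {1..n}" and "b \<in> {1..n}" and "a \<noteq> b"
  shows "psis a * psi b = - (psi b * psis a)"
  using psi_psis_anticommute[OF assms(2,1)] assms(3) by (simp add: minus_equation_iff)

lemma psi_square_zero:
  assumes "a \<in> {1..n}"
  shows "psi a * psi a = 0"
  by (rule k_algebra_emb_double_eq_zero[OF emb two_nonzero]) (use relation[OF assms assms] in blast)

lemma psis_square_zero:
  assumes "a \<in> {1..n}"
  shows "psis a * psis a = 0"
  by (rule k_algebra_emb_double_eq_zero[OF emb two_nonzero]) (use relation[OF assms assms] in blast)

lemma om_commute_psi:
  assumes "a \<in> {1..n}" and "b \<in> {1..n}" and "a \<noteq> b"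
  shows "om a * psi b = psi b * om a"
  using relation[OF assms(1,2)] assms(3) by simp

lemma om_commute_psis:
  assumes "a \<in> {1..n}" and "b \<in> {1..n}" and "a \<noteq> b"
  shows "om a * psis b = psis b * om a"
  using relation[OF assms(1,2)] assms(3) by simp

lemma generator_commute_commutator:
  assumes "phi \<in> {psi a, psis a}" and "a \<in> {1..n}" and "b \<in> {1..n}" and "a \<noteq> b"
  shows "phi * commutator (psi b) (psis b) = commutator (psi b) (psis b) * phi"
  using assms
  by (auto intro!: commute_commutator_if_anticommute
      psi_anticommute psis_anticommute psi_psis_anticommute psis_psi_anticommute)

lemma generator_anticommute_commutator:
  assumes "phi \<in> {psi a, psis a}" and "a \<in> {1..n}"
  shows "phi * commutator (psi a) (psis a) = - (commutator (psi a) (psis a) * phi)"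
  using assms anticommute_commutator_left[OF psi_square_zero]
    anticommute_commutator_right[OF psis_square_zero]
  by auto

lemma om_commute_commutator:
  assumes "a \<in> {1..n}" and "b \<in> {1..n}" and "a \<noteq> b"
  shows "om a * commutator (psi b) (psis b) = commutator (psi b) (psis b) * om a"
  using assms by (intro commute_commutator om_commute_psi om_commute_psis)

lemma commutators_commute:
  assumes "a \<in> {1..n}" and "b \<in> {1..n}"
  shows "commutator (psi a) (psis a) * commutator (psi b) (psis b)
    = commutator (psi b) (psis b) * commutator (psi a) (psis a)"
proof (cases "a = b")
  case False
  then have "b \<noteq> a" by simp
  then have "psi b * commutator (psi a) (psis a) = commutator (psi a) (psis a) * psi b"
    and "psis b * commutator (psi a) (psis a) = commutator (psi a) (psis a) * psis b"
    by (auto intro: generator_commute_commutator[OF _ assms(2,1)])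
  then show ?thesis
    by (metis commute_commutator)
qed simp

lemma commutator_square:
  assumes "a \<in> {1..n}"
  shows "commutator (psi a) (psis a) * commutator (psi a) (psis a) = 1"
proof (rule commutator_square_eq_one[OF psi_square_zero[OF assms] psis_square_zero[OF assms]])
  have "om a ^ k * omi a ^ k = 1"
    using relation[OF assms assms] by (simp add: power_mult_eq_one)
  then show "(psi a * psis a + emb (inverse q ^ k) * (psis a * psi a))
      * (psi a * psis a + emb (q ^ k) * (psis a * psi a)) = 1"
    using relation[OF assms assms] by (simp add: k_algebra_emb_power[OF emb] mult.assoc)
  show "emb (q ^ k) * y = y * emb (q ^ k)" for y
    by (rule k_algebra_emb_central[OF emb])
  show "emb (inverse q ^ k) * emb (q ^ k) = 1"
    using k_algebra_emb_inverse[OF emb, of "q ^ k"] q_nonzero by (simp add: power_inverse)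
qed

lemma fr_commute_generator:
  assumes "phi \<in> {psi a, psis a}" and "a \<in> {1..n}" and "r < a"
  shows "phi * fr psi psis r = fr psi psis r * phi"
  unfolding fr_def
  by (rule commute_prod_list) (use assms in \<open>auto intro: generator_commute_commutator\<close>)

lemma om_commute_fr:
  assumes "a \<in> {1..n}" and "r < a"
  shows "om a * fr psi psis r = fr psi psis r * om a"
  unfolding fr_def
  by (rule commute_prod_list) (use assms in \<open>auto intro: om_commute_commutator\<close>)

lemma fr_anticommute_generator:
  assumes "phi \<in> {psi a, psis a}" and "1 \<le> a" and "a \<le> r" and "r \<le> n"
  shows "phi * fr psi psis r = - (fr psi psis r * phi)"
proof -
  have split: "[1..<Suc r] = [1..<a] @ a # [Suc a..<Suc r]"
    using assms by (intro upt_split_at) auto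
  show ?thesis
    unfolding fr_def split map_append list.map(2)
    by (rule anticommute_prod_list)
      (use assms in \<open>auto intro: generator_commute_commutator generator_anticommute_commutator\<close>)
qed

lemma fr_commute:
  assumes "r \<le> n" and "s \<le> n"
  shows "fr psi psis r * fr psi psis s = fr psi psis s * fr psi psis r"
  unfolding fr_def
  by (rule prod_list_commute) (use assms in \<open>auto intro: commutators_commute\<close>)

lemma fr_square:
  assumes "r \<le> n"
  shows "fr psi psis r ^ 2 = 1"
  unfolding fr_def power2_eq_square
  by (rule prod_list_square_eq_one) (use assms in \<open>auto intro: commutator_square commutators_commute\<close>)

end

theorem proposition3p9:
  fixes emb :: "'k::field \<Rightarrow> 'a::ring_1"
    and q :: 'k and n k :: nat
    and psi psis om omi :: "nat \<Rightarrow> 'a"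
  assumes "(2::'k) \<noteq> 0"
    and "q \<noteq> 0"
    and "n \<ge> 1" and "k \<ge> 1"
    and "k_algebra_emb emb"
    and "qcl_relations emb q n k psi psis om omi"
  shows "(\<forall>r\<in>{1..n}. \<forall>a\<in>{1..n}. r < a \<longrightarrow>
            (\<forall>phi\<in>{psi a, psis a}. phi * fr psi psis r = fr psi psis r * phi) \<and>
            om a * fr psi psis r = fr psi psis r * om a)
       \<and> (\<forall>r\<in>{1..n}. \<forall>a\<in>{1..n}. a \<le> r \<longrightarrow>
            (\<forall>phi\<in>{psi a, psis a}. phi * fr psi psis r = - (fr psi psis r * phi)))
       \<and> (\<forall>r\<in>{1..n}. \<forall>s\<in>{1..n}. fr psi psis r * fr psi psis s = fr psi psis s * fr psi psis r)
       \<and> (\<forall>r\<in>{1..n}. fr psi psis r ^ 2 = 1)"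
proof -
  interpret quantum_clifford emb q n k psi psis om omi
    using assms by unfold_locales
  show ?thesis
    using fr_commute_generator om_commute_fr fr_anticommute_generator fr_commute fr_square
    by simp
qed

end
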